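(* Let $H$ be a non-transitive tournament. If $H$ is not strongly connected, then $H$ is not quasirandom-forcing.
   Context: A tournament is an orientation of a complete graph; $\mathrm{Aut}(H)$ is its automorphism group. For tournaments $H,G$, $d(H,G)$ is the probability that $\lvert H\rvert$ uniformly random distinct vertices of $G$ induce a tournament isomorphic to $H$ (and $0$ if $\lvert H\rvert>\lvert G\rvert$). A sequence $(G_n)$ of tournaments with $\lvert G_n\rvert\to\infty$ is quasirandom if $\lim_{n\to\infty} d(F,G_n)=\frac{m!}{\lvert\mathrm{Aut}(F)\rvert}2^{-\binom{m}{2}}$ for every tournament $F$ with $m$ vertices. A $k$-vertex tournament $H$ is quasirandom-forcing if every sequence $(G_n)$ of tournaments with $\lvert G_n\rvert\to\infty$ and $\lim_{n\to\infty} d(H,G_n)=\frac{k!}{\lvert\mathrm{Aut}(H)\rvert}2^{-\binom{k}{2}}$ is quasirandom. *)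

theory Defs
  imports Complex_Main "HOL-Combinatorics.Permutations"
begin

text \<open>A tournament on the vertex set {0..<n} is given by an arc relation E
(E u v means the arc is directed from u to v); values outside {0..<n} are irrelevant.\<close>

definition tournament :: "nat \<Rightarrow> (nat \<Rightarrow> nat \<Rightarrow> bool) \<Rightarrow> bool" where
  "tournament n E \<longleftrightarrow> (\<forall>u<n. \<not> E u u) \<and> (\<forall>u<n. \<forall>v<n. u \<noteq> v \<longrightarrow> (E u v \<longleftrightarrow> \<not> E v u))"

definition transitive_tournament :: "nat \<Rightarrow> (nat \<Rightarrow> nat \<Rightarrow> bool) \<Rightarrow> bool" where
  "transitive_tournament n E \<longleftrightarrow> (\<forall>u<n. \<forall>v<n. \<forall>w<n. E u v \<and> E v w \<longrightarrow> E u w)"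

definition strongly_connected :: "nat \<Rightarrow> (nat \<Rightarrow> nat \<Rightarrow> bool) \<Rightarrow> bool" where
  "strongly_connected n E \<longleftrightarrow>
     (\<forall>u<n. \<forall>v<n. (\<lambda>x y. x < n \<and> y < n \<and> E x y)\<^sup>*\<^sup>* u v)"

definition Aut :: "nat \<Rightarrow> (nat \<Rightarrow> nat \<Rightarrow> bool) \<Rightarrow> (nat \<Rightarrow> nat) set" where
  "Aut k H = {p. p permutes {0..<k} \<and> (\<forall>u<k. \<forall>v<k. H u v \<longleftrightarrow> H (p u) (p v))}"

definition induces_copy ::
  "nat \<Rightarrow> (nat \<Rightarrow> nat \<Rightarrow> bool) \<Rightarrow> (nat \<Rightarrow> nat \<Rightarrow> bool) \<Rightarrow> nat set \<Rightarrow> bool" where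
  "induces_copy k H G S \<longleftrightarrow>
     (\<exists>f. bij_betw f {0..<k} S \<and> (\<forall>u<k. \<forall>v<k. H u v \<longleftrightarrow> G (f u) (f v)))"

text \<open>d(H,G): probability that k uniformly random distinct vertices of G (on {0..<n})
  induce a copy of H; equals 0 when k > n (then there are no k-subsets and n choose k = 0).\<close>
definition density ::
  "nat \<Rightarrow> (nat \<Rightarrow> nat \<Rightarrow> bool) \<Rightarrow> nat \<Rightarrow> (nat \<Rightarrow> nat \<Rightarrow> bool) \<Rightarrow> real" where
  "density k H n G =
     real (card {S. S \<subseteq> {0..<n} \<and> card S = k \<and> induces_copy k H G S}) / real (n choose k)"

definition random_density :: "nat \<Rightarrow> (nat \<Rightarrow> nat \<Rightarrow> bool) \<Rightarrow> real" where
  "random_density m F = fact m / real (card (Aut m F)) / 2 ^ (m choose 2)"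

text \<open>A sequence of tournaments: i-th tournament has vertex set {0..<sz i} and arcs Gs i.\<close>
definition quasirandom :: "(nat \<Rightarrow> nat) \<Rightarrow> (nat \<Rightarrow> nat \<Rightarrow> nat \<Rightarrow> bool) \<Rightarrow> bool" where
  "quasirandom sz Gs \<longleftrightarrow>
     (\<forall>m F. tournament m F \<longrightarrow>
        (\<lambda>i. density m F (sz i) (Gs i)) \<longlonglongrightarrow> random_density m F)"

definition quasirandom_forcing :: "nat \<Rightarrow> (nat \<Rightarrow> nat \<Rightarrow> bool) \<Rightarrow> bool" where
  "quasirandom_forcing k H \<longleftrightarrow>
     (\<forall>sz Gs. (\<forall>i. tournament (sz i) (Gs i)) \<longrightarrow> filterlim sz at_top sequentially \<longrightarrow>
        (\<lambda>i. density k H (sz i) (Gs i)) \<longlonglongrightarrow> random_density k H \<longrightarrow>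
        quasirandom sz Gs)"

end

theory Submission
  imports Defs
begin

text \<open>
  As \<open>H\<close> is not strongly connected, its vertices split into a proper nonempty dominating set \<open>B\<close>
  and the rest; as \<open>H\<close> is not transitive, a cyclic triangle forces \<open>k \<ge> 4\<close>.
  Call a tournament on \<open>n\<close> vertices split at \<open>a\<close> if each of the first \<open>a\<close> vertices beats all
  later ones. A split tournament contains the strongly connected tournament on four vertices only
  inside one of its parts, so for \<open>n = 4 i\<close>, \<open>a = p i\<close> and \<open>p \<in> {1, 2, 3}\<close> its density stays at
  most about \<open>(p^4 + (4 - p)^4) / 4^4 < 3/8\<close>, its random density: such sequences are never
  quasirandom. Yet they can have the random density of \<open>H\<close>. The transitive split tournament
  contains no copy of \<open>H\<close>. If both parts are oriented uniformly at random, the copies of \<open>H\<close>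
  lying inside a part or split along \<open>B\<close> already outnumber, in expectation and for suitable \<open>p\<close>,
  the random count of copies of \<open>H\<close>; so some split tournament has at least that many copies.
  Moving from the transitive one to it vertex by vertex changes the count by at most
  \<open>(n - 1 choose k - 1)\<close> per step, hence some intermediate split tournament has \<open>H\<close>-density
  within \<open>k / n\<close> of the random density.
\<close>

section \<open>Tournaments and copies\<close>

lemma tournament_irrefl: "tournament n G \<Longrightarrow> u < n \<Longrightarrow> \<not> G u u"
  unfolding tournament_def by blast

lemma tournament_asym: "tournament n G \<Longrightarrow> u < n \<Longrightarrow> v < n \<Longrightarrow> G u v \<Longrightarrow> \<not> G v u"
  unfolding tournament_def by blast

lemma tournament_flip:
  "tournament n G \<Longrightarrow> u < n \<Longrightarrow> v < n \<Longrightarrow> u \<noteq> v \<Longrightarrow> G u v \<longleftrightarrow> \<not> G v u"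
  unfolding tournament_def by blast

lemma tournamentI:
  assumes "\<And>u. u < n \<Longrightarrow> \<not> G u u"
    and "\<And>u v. u < n \<Longrightarrow> v < n \<Longrightarrow> u \<noteq> v \<Longrightarrow> G u v \<longleftrightarrow> \<not> G v u"
  shows "tournament n G"
  unfolding tournament_def using assms by blast

lemma tournament_less: "tournament n (\<lambda>u v. u < v)"
  by (rule tournamentI) auto

lemma finite_Aut: "finite (Aut k H)"
  unfolding Aut_def by (rule finite_subset[OF _ finite_permutations[of "{0..<k}"]]) auto

lemma id_in_Aut: "id \<in> Aut k H"
  unfolding Aut_def by (auto simp: permutes_id)

lemma card_Aut_pos: "card (Aut k H) > 0"
  using finite_Aut id_in_Aut by (metis card_gt_0_iff empty_iff)

lemma random_density_nonneg: "0 \<le> random_density k H"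
  by (simp add: random_density_def)

definition copy_count :: "nat \<Rightarrow> (nat \<Rightarrow> nat \<Rightarrow> bool) \<Rightarrow> nat \<Rightarrow> (nat \<Rightarrow> nat \<Rightarrow> bool) \<Rightarrow> nat" where
  "copy_count k H n G = card {S. S \<subseteq> {0..<n} \<and> card S = k \<and> induces_copy k H G S}"

definition copy_map :: "nat \<Rightarrow> (nat \<Rightarrow> nat \<Rightarrow> bool) \<Rightarrow> (nat \<Rightarrow> nat \<Rightarrow> bool) \<Rightarrow> (nat \<Rightarrow> nat) \<Rightarrow> bool" where
  "copy_map k H G f \<longleftrightarrow> (\<forall>u<k. \<forall>v<k. H u v = G (f u) (f v))"

definition injections :: "nat \<Rightarrow> nat \<Rightarrow> (nat \<Rightarrow> nat) set" where
  "injections k n = {f \<in> {0..<k} \<rightarrow>\<^sub>E {0..<n}. inj_on f {0..<k}}"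

lemma density_eq_copy_count: "density k H n G = real (copy_count k H n G) / real (n choose k)"
  unfolding density_def copy_count_def by simp

lemma finite_injections: "finite (injections k n)"
  unfolding injections_def by (rule finite_subset[of _ "{0..<k} \<rightarrow>\<^sub>E {0..<n}"]) (auto intro: finite_PiE)

lemma relative_permutation_in_Aut:
  assumes f0: "f0 \<in> injections k n" "copy_map k H G f0"
    and f: "f \<in> injections k n" "copy_map k H G f" and image: "f ` {0..<k} = f0 ` {0..<k}"
  shows "(\<lambda>x. if x < k then inv_into {0..<k} f0 (f x) else x) \<in> Aut k H"
proof -
  define p where "p = (\<lambda>x. if x < k then inv_into {0..<k} f0 (f x) else x)"
  have bij: "bij_betw f0 {0..<k} (f0 ` {0..<k})" "bij_betw f {0..<k} (f0 ` {0..<k})"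
    using f0(1) f(1) image by (auto simp: bij_betw_def injections_def)
  have p: "f0 (p x) = f x" if "x < k" for x
  proof -
    have "f x \<in> f0 ` {0..<k}" using that by (simp flip: image)
    then show ?thesis using that by (simp add: p_def f_inv_into_f)
  qed
  have "bij_betw (inv_into {0..<k} f0 \<circ> f) {0..<k} {0..<k}"
    using bij_betw_trans[OF bij(2) bij_betw_inv_into[OF bij(1)]] .
  then have "bij_betw p {0..<k} {0..<k}"
    by (rule bij_betw_cong[THEN iffD1, rotated]) (auto simp: p_def)
  then have "p permutes {0..<k}"
    by (rule bij_imp_permutes) (auto simp: p_def)
  moreover have "H u v = H (p u) (p v)" if "u < k" "v < k" for u v
  proof -
    have "p u < k" "p v < k"
      using that \<open>bij_betw p {0..<k} {0..<k}\<close> by (auto dest: bij_betwE)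
    then have "H (p u) (p v) = G (f u) (f v)"
      using f0(2) p[OF that(1)] p[OF that(2)] by (auto simp: copy_map_def)
    also have "\<dots> = H u v" using f(2) that by (auto simp: copy_map_def)
    finally show ?thesis by simp
  qed
  ultimately show ?thesis by (auto simp: Aut_def p_def)
qed

lemma card_copy_maps_onto_le_card_Aut:
  "card {f \<in> injections k n. copy_map k H G f \<and> f ` {0..<k} = S} \<le> card (Aut k H)"
proof (cases "{f \<in> injections k n. copy_map k H G f \<and> f ` {0..<k} = S} = {}")
  case True
  then show ?thesis by (metis card.empty zero_le)
next
  case False
  let ?M = "{f \<in> injections k n. copy_map k H G f \<and> f ` {0..<k} = S}"
  from False obtain f0 where f0: "f0 \<in> ?M" by blast
  define \<phi> where "\<phi> f = (\<lambda>x. if x < k then inv_into {0..<k} f0 (f x) else x)" for f :: "nat \<Rightarrow> nat"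
  have "inj_on \<phi> ?M"
  proof (rule inj_onI)
    fix f g assume fg: "f \<in> ?M" "g \<in> ?M" "\<phi> f = \<phi> g"
    show "f = g"
    proof
      fix x show "f x = g x"
      proof (cases "x < k")
        case True
        moreover have "f x \<in> f0 ` {0..<k}" "g x \<in> f0 ` {0..<k}"
          using fg(1,2) f0 True by auto
        ultimately have "f0 (\<phi> f x) = f x" "f0 (\<phi> g x) = g x"
          by (simp_all add: \<phi>_def f_inv_into_f)
        then show ?thesis using fg(3) by metis
      next
        case False
        then show ?thesis using fg(1,2) by (auto simp: injections_def PiE_def extensional_def)
      qed
    qed
  qed
  moreover have "\<phi> ` ?M \<subseteq> Aut k H"
    using f0 by (auto simp: \<phi>_def intro!: relative_permutation_in_Aut)
  ultimately show ?thesis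
    by (metis (no_types, lifting) card_inj_on_le finite_Aut)
qed

lemma card_copy_maps_le:
  "card {f \<in> injections k n. copy_map k H G f} \<le> card (Aut k H) * copy_count k H n G"
proof -
  let ?C = "{S. S \<subseteq> {0..<n} \<and> card S = k \<and> induces_copy k H G S}"
  let ?M = "\<lambda>S. {f \<in> injections k n. copy_map k H G f \<and> f ` {0..<k} = S}"
  have finite_C: "finite ?C" by (rule finite_subset[of _ "Pow {0..<n}"]) auto
  have "{f \<in> injections k n. copy_map k H G f} \<subseteq> (\<Union>S\<in>?C. ?M S)"
  proof
    fix f assume f: "f \<in> {f \<in> injections k n. copy_map k H G f}"
    then have "inj_on f {0..<k}" "f ` {0..<k} \<subseteq> {0..<n}" by (auto simp: injections_def)
    moreover from this have "induces_copy k H G (f ` {0..<k})"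
      unfolding induces_copy_def using f by (auto simp: bij_betw_def copy_map_def)
    ultimately show "f \<in> (\<Union>S\<in>?C. ?M S)" using f by (auto simp: card_image)
  qed
  then have "card {f \<in> injections k n. copy_map k H G f} \<le> card (\<Union>S\<in>?C. ?M S)"
    by (intro card_mono) (auto intro!: finite_UN_I finite_C finite_subset[OF _ finite_injections])
  also have "\<dots> \<le> (\<Sum>S\<in>?C. card (?M S))"
    by (rule card_UN_le[OF finite_C])
  also have "\<dots> \<le> (\<Sum>S\<in>?C. card (Aut k H))"
    by (intro sum_mono card_copy_maps_onto_le_card_Aut)
  also have "\<dots> = card (Aut k H) * copy_count k H n G" by (simp add: copy_count_def)
  finally show ?thesis .
qed

section \<open>Elementary counting\<close>

definition falling_fact :: "nat \<Rightarrow> nat \<Rightarrow> real" where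
  "falling_fact m t = (\<Prod>i = 0..<t. real m - real i)"

lemma falling_fact_eq_binomial: "falling_fact m t = real (m choose t) * fact t"
  unfolding falling_fact_def binomial_gbinomial gbinomial_mult_fact' by simp

lemma of_nat_prod_diff_eq_falling_fact: "real (\<Prod>i = 0..<t. m - i) = falling_fact m t"
proof (cases "t \<le> m")
  case True
  then show ?thesis
    unfolding falling_fact_def of_nat_prod by (intro prod.cong) (auto simp: of_nat_diff)
next
  case False
  then have "m \<in> {0..<t}" by simp
  then have "(\<Prod>i = 0..<t. m - i) = 0" "falling_fact m t = 0"
    unfolding falling_fact_def by (auto intro!: prod_zero bexI[of _ m])
  then show ?thesis by simp
qed

lemma card_inj_funcset_eq_falling_fact:
  assumes "finite A" "finite C"
  shows "real (card {f \<in> A \<rightarrow>\<^sub>E C. inj_on f A}) = falling_fact (card C) (card A)"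
  using card_inj_on_subset_funcset[OF assms(1,2) order_refl] of_nat_prod_diff_eq_falling_fact
  by simp

lemma falling_fact_scaled_tendsto: "(\<lambda>i. falling_fact (p * i) t / real i ^ t) \<longlonglongrightarrow> real p ^ t"
proof -
  have "(\<lambda>i. \<Prod>s = 0..<t. real p - real s / real i) \<longlonglongrightarrow> (\<Prod>s = 0..<t. real p - 0)"
    by (intro tendsto_prod tendsto_diff tendsto_const lim_const_over_n)
  moreover have "(\<Prod>s = 0..<t. real p - real s / real i) = falling_fact (p * i) t / real i ^ t"
    if "i > 0" for i
  proof -
    have "(\<Prod>s = 0..<t. real p - real s / real i) = (\<Prod>s = 0..<t. (real (p * i) - real s) / real i)"
      using that by (intro prod.cong) (auto simp: field_simps)
    also have "\<dots> = falling_fact (p * i) t / real i ^ t"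
      by (simp add: prod_dividef falling_fact_def)
    finally show ?thesis .
  qed
  then have "eventually (\<lambda>i. (\<Prod>s = 0..<t. real p - real s / real i) = falling_fact (p * i) t / real i ^ t)
      sequentially"
    using eventually_gt_at_top[of 0] by (rule eventually_mono[rotated]) blast
  ultimately show ?thesis
    by (simp add: Lim_transform_eventually)
qed

lemma card_less_pairs:
  fixes S :: "nat set"
  assumes "finite S"
  shows "card {(x, y). x \<in> S \<and> y \<in> S \<and> x < y} = card S choose 2"
proof -
  have "bij_betw (\<lambda>(x, y). {x, y}) {(x, y). x \<in> S \<and> y \<in> S \<and> x < y} {T. T \<subseteq> S \<and> card T = 2}"
  proof (rule bij_betwI')
    fix p q assume "p \<in> {(x, y). x \<in> S \<and> y \<in> S \<and> x < y}" "q \<in> {(x, y). x \<in> S \<and> y \<in> S \<and> x < y}"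
    then show "((case p of (x, y) \<Rightarrow> {x, y}) = (case q of (x, y) \<Rightarrow> {x, y})) = (p = q)"
      by (cases p; cases q) (auto simp: doubleton_eq_iff)
  next
    fix T assume "T \<in> {T. T \<subseteq> S \<and> card T = 2}"
    then obtain x y where T: "T = {x, y}" "x \<noteq> y" "T \<subseteq> S" by (auto simp: card_2_iff)
    show "\<exists>p\<in>{(x, y). x \<in> S \<and> y \<in> S \<and> x < y}. T = (case p of (x, y) \<Rightarrow> {x, y})"
    proof (cases "x < y")
      case True then show ?thesis using T by (intro bexI[of _ "(x, y)"]) auto
    next
      case False then show ?thesis using T by (intro bexI[of _ "(y, x)"]) auto
    qed
  qed auto
  from bij_betw_same_card[OF this] show ?thesis by (simp add: n_subsets[OF assms])
qed

lemma choose_two_add: "(j + m) choose 2 = (j choose 2) + (m choose 2) + j * m"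
  by (induction m) (simp_all add: numeral_2_eq_2)

lemma card_Pow_restrict:
  assumes "finite P" "Q \<subseteq> P" "\<tau> \<subseteq> Q"
  shows "card {\<sigma> \<in> Pow P. \<sigma> \<inter> Q = \<tau>} = 2 ^ (card P - card Q)"
proof -
  have "bij_betw (\<lambda>\<rho>. \<rho> \<union> \<tau>) (Pow (P - Q)) {\<sigma> \<in> Pow P. \<sigma> \<inter> Q = \<tau>}"
    by (rule bij_betw_byWitness[where f' = "\<lambda>\<sigma>. \<sigma> - Q"]) (use assms in auto)
  then have "card {\<sigma> \<in> Pow P. \<sigma> \<inter> Q = \<tau>} = card (Pow (P - Q))"
    by (simp add: bij_betw_same_card)
  also have "\<dots> = 2 ^ (card P - card Q)"
    using assms by (simp add: card_Pow card_Diff_subset finite_subset)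
  finally show ?thesis .
qed

section \<open>Split tournaments\<close>

definition splits_at :: "nat \<Rightarrow> nat \<Rightarrow> (nat \<Rightarrow> nat \<Rightarrow> bool) \<Rightarrow> bool" where
  "splits_at a n G \<longleftrightarrow> (\<forall>u v. u < a \<longrightarrow> a \<le> v \<longrightarrow> v < n \<longrightarrow> G u v)"

definition inner_pairs :: "nat \<Rightarrow> nat \<Rightarrow> (nat \<times> nat) set" where
  "inner_pairs a n = {(x, y). x < y \<and> y < n \<and> (x < a \<longleftrightarrow> y < a)}"

text \<open>The pairs in \<open>\<sigma>\<close> are the pairs inside a part that are oriented upwards.\<close>

definition split_tournament :: "nat \<Rightarrow> (nat \<times> nat) set \<Rightarrow> nat \<Rightarrow> nat \<Rightarrow> bool" where
  "split_tournament a \<sigma> u v \<longleftrightarrow>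
     (u < a \<and> a \<le> v) \<or> ((u < a \<longleftrightarrow> v < a) \<and> ((u < v \<and> (u, v) \<in> \<sigma>) \<or> (v < u \<and> (v, u) \<notin> \<sigma>)))"

definition dominating_set :: "nat \<Rightarrow> (nat \<Rightarrow> nat \<Rightarrow> bool) \<Rightarrow> nat set \<Rightarrow> bool" where
  "dominating_set k H B \<longleftrightarrow> B \<subseteq> {0..<k} \<and> (\<forall>u\<in>B. \<forall>v<k. v \<notin> B \<longrightarrow> H u v)"

definition split_injections :: "nat \<Rightarrow> nat \<Rightarrow> nat \<Rightarrow> nat set \<Rightarrow> (nat \<Rightarrow> nat) set" where
  "split_injections k n a B = {f \<in> injections k n. \<forall>u<k. f u < a \<longleftrightarrow> u \<in> B}"

lemma tournament_split_tournament: "tournament n (split_tournament a \<sigma>)"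
  by (rule tournamentI) (auto simp: split_tournament_def)

lemma splits_at_split_tournament: "splits_at a n (split_tournament a \<sigma>)"
  by (auto simp: splits_at_def split_tournament_def)

lemma splits_at_less: "splits_at a n (\<lambda>u v. u < v)"
  by (auto simp: splits_at_def)

lemma finite_inner_pairs: "finite (inner_pairs a n)"
  by (rule finite_subset[of _ "{0..<n} \<times> {0..<n}"]) (auto simp: inner_pairs_def)

lemma dominating_set_empty: "dominating_set k H {}"
  by (simp add: dominating_set_def)

lemma dominating_set_all: "dominating_set k H {0..<k}"
  by (auto simp: dominating_set_def)

lemma finite_split_injections: "finite (split_injections k n a B)"
  by (rule finite_subset[OF _ finite_injections]) (auto simp: split_injections_def)

lemma merge_in_split_injections:
  assumes B: "B \<subseteq> {0..<k}" and "a \<le> n"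
    and g: "g \<in> B \<rightarrow>\<^sub>E {0..<a}" "inj_on g B"
    and h: "h \<in> ({0..<k} - B) \<rightarrow>\<^sub>E {a..<n}" "inj_on h ({0..<k} - B)"
  shows "(\<lambda>u. if u \<in> B then g u else h u) \<in> split_injections k n a B"
proof -
  let ?f = "\<lambda>u. if u \<in> B then g u else h u"
  have g_below: "g u < a" if "u \<in> B" for u using PiE_mem[OF g(1) that] by simp
  have h_above: "a \<le> h u \<and> h u < n" if "u \<in> {0..<k} - B" for u using PiE_mem[OF h(1) that] by simp
  have below: "?f u < a \<longleftrightarrow> u \<in> B" if "u < k" for u
    using that g_below[of u] h_above[of u] by auto
  have "?f \<in> {0..<k} \<rightarrow>\<^sub>E {0..<n}"
  proof (rule PiE_I)
    fix u assume "u \<in> {0..<k}"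
    then show "?f u \<in> {0..<n}" using \<open>a \<le> n\<close> g_below[of u] h_above[of u] by auto
  next
    fix u assume "u \<notin> {0..<k}"
    then show "?f u = undefined" using B PiE_arb[OF h(1), of u] by auto
  qed
  moreover have "inj_on ?f {0..<k}"
  proof (rule inj_onI)
    fix u v assume u: "u \<in> {0..<k}" and v: "v \<in> {0..<k}" and eq: "?f u = ?f v"
    then have "u \<in> B \<longleftrightarrow> v \<in> B" using below[of u] below[of v] by simp
    then show "u = v" using eq g(2) h(2) u v by (cases "u \<in> B") (auto simp: inj_on_def)
  qed
  ultimately show ?thesis using below by (auto simp: split_injections_def injections_def)
qed

lemma card_split_injections_ge:
  assumes B: "B \<subseteq> {0..<k}" and "a \<le> n"
  shows "falling_fact a (card B) * falling_fact (n - a) (k - card B) \<le> real (card (split_injections k n a B))"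
proof -
  define C where "C = {0..<k} - B"
  let ?L = "{g \<in> B \<rightarrow>\<^sub>E {0..<a}. inj_on g B}"
  let ?R = "{h \<in> C \<rightarrow>\<^sub>E {a..<n}. inj_on h C}"
  define merge where "merge = (\<lambda>(g, h) u. if u \<in> B then g u else h u :: nat)"
  have "inj_on merge (?L \<times> ?R)"
  proof (rule inj_onI, clarify)
    fix g h g' h'
    assume g: "g \<in> B \<rightarrow>\<^sub>E {0..<a}" "g' \<in> B \<rightarrow>\<^sub>E {0..<a}"
      and h: "h \<in> C \<rightarrow>\<^sub>E {a..<n}" "h' \<in> C \<rightarrow>\<^sub>E {a..<n}"
      and eq: "merge (g, h) = merge (g', h')"
    have "g x = g' x \<and> h x = h' x" for x
      using fun_cong[OF eq, of x] PiE_arb[OF g(1), of x] PiE_arb[OF g(2), of x]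
        PiE_arb[OF h(1), of x] PiE_arb[OF h(2), of x]
      by (cases "x \<in> B") (auto simp: merge_def C_def)
    then show "g = g' \<and> h = h'" by auto
  qed
  moreover have "merge ` (?L \<times> ?R) \<subseteq> split_injections k n a B"
    using merge_in_split_injections[OF B \<open>a \<le> n\<close>] by (auto simp: merge_def C_def)
  ultimately have "card (?L \<times> ?R) \<le> card (split_injections k n a B)"
    by (rule card_inj_on_le[OF _ _ finite_split_injections])
  then have "real (card ?L) * real (card ?R) \<le> real (card (split_injections k n a B))"
    by (simp add: card_cartesian_product flip: of_nat_mult)
  moreover have "finite B" using B finite_subset by blast
  moreover have "card C = k - card B"
    using B \<open>finite B\<close> by (simp add: C_def card_Diff_subset)
  ultimately show ?thesis
    using card_inj_funcset_eq_falling_fact[of B "{0..<a}"] card_inj_funcset_eq_falling_fact[of C "{a..<n}"]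
    by (simp add: C_def)
qed

lemma copy_map_split_tournament:
  assumes H: "tournament k H" and dom: "dominating_set k H B" and f: "f \<in> split_injections k n a B"
    and \<sigma>: "\<And>u v. u < k \<Longrightarrow> v < k \<Longrightarrow> f u < f v \<Longrightarrow> (f u < a \<longleftrightarrow> f v < a) \<Longrightarrow>
      (f u, f v) \<in> \<sigma> \<longleftrightarrow> H u v"
  shows "copy_map k H (split_tournament a \<sigma>) f"
  unfolding copy_map_def
proof (intro allI impI)
  fix u v assume u: "u < k" and v: "v < k"
  have below: "f u < a \<longleftrightarrow> u \<in> B" "f v < a \<longleftrightarrow> v \<in> B"
    using f u v by (auto simp: split_injections_def)
  show "H u v = split_tournament a \<sigma> (f u) (f v)"
  proof (cases "u = v")
    case True
    then show ?thesis using tournament_irrefl[OF H u] by (simp add: split_tournament_def)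
  next
    case False
    then have "f u \<noteq> f v"
      using f u v inj_onD[of f "{0..<k}" u v] by (auto simp: split_injections_def injections_def)
    have flip: "H u v \<longleftrightarrow> \<not> H v u" by (rule tournament_flip[OF H u v False])
    consider "u \<in> B" "v \<notin> B" | "u \<notin> B" "v \<in> B" | "u \<in> B \<longleftrightarrow> v \<in> B" by auto
    then show ?thesis
    proof cases
      case 1
      then have "H u v" using dom v by (simp add: dominating_set_def)
      then show ?thesis using 1 below by (simp add: split_tournament_def)
    next
      case 2
      then have "H v u" using dom u by (simp add: dominating_set_def)
      then show ?thesis using 2 below flip by (simp add: split_tournament_def)
    next
      case 3
      then have same: "f u < a \<longleftrightarrow> f v < a" using below by simp
      show ?thesis
      proof (cases "f u < f v")
        case True
        then show ?thesis using \<sigma>[OF u v True same] same by (auto simp: split_tournament_def)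
      next
        case False
        then have "f v < f u" using \<open>f u \<noteq> f v\<close> by simp
        then show ?thesis
          using \<sigma>[OF v u _ same[symmetric]] same flip by (auto simp: split_tournament_def)
      qed
    qed
  qed
qed

lemma card_inner_pairs_in_image_le:
  assumes B: "B \<subseteq> {0..<k}" and f: "f \<in> split_injections k n a B"
  shows "card {(x, y) \<in> inner_pairs a n. x \<in> f ` {0..<k} \<and> y \<in> f ` {0..<k}}
    \<le> (card B choose 2) + ((k - card B) choose 2)"
proof -
  define C where "C = {0..<k} - B"
  let ?pairs = "\<lambda>S. {(x, y). x \<in> S \<and> y \<in> S \<and> x < y}"
  have f_inj: "inj_on f {0..<k}" and below: "\<And>u. u < k \<Longrightarrow> f u < a \<longleftrightarrow> u \<in> B"
    using f by (auto simp: split_injections_def injections_def)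
  have "{(x, y) \<in> inner_pairs a n. x \<in> f ` {0..<k} \<and> y \<in> f ` {0..<k}} \<subseteq> ?pairs (f ` B) \<union> ?pairs (f ` C)"
  proof
    fix p assume "p \<in> {(x, y) \<in> inner_pairs a n. x \<in> f ` {0..<k} \<and> y \<in> f ` {0..<k}}"
    then obtain u v where "u < k" "v < k" "p = (f u, f v)" "(f u, f v) \<in> inner_pairs a n" by auto
    then show "p \<in> ?pairs (f ` B) \<union> ?pairs (f ` C)"
      using below[of u] below[of v] by (auto simp: inner_pairs_def C_def)
  qed
  moreover have "finite (?pairs (f ` B) \<union> ?pairs (f ` C))"
    by (rule finite_subset[of _ "f ` {0..<k} \<times> f ` {0..<k}"]) (use B in \<open>auto simp: C_def\<close>)
  ultimately have "card {(x, y) \<in> inner_pairs a n. x \<in> f ` {0..<k} \<and> y \<in> f ` {0..<k}}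
      \<le> card (?pairs (f ` B) \<union> ?pairs (f ` C))"
    by (rule card_mono[rotated])
  also have "\<dots> \<le> card (?pairs (f ` B)) + card (?pairs (f ` C))"
    by (rule card_Un_le)
  also have "\<dots> = (card B choose 2) + ((k - card B) choose 2)"
    using B card_image[OF inj_on_subset[OF f_inj B]] card_image[OF inj_on_subset[OF f_inj, of C]]
    by (simp add: card_less_pairs C_def card_Diff_subset finite_subset)
  finally show ?thesis .
qed

lemma card_orientations_with_copy_map_ge:
  assumes H: "tournament k H" and dom: "dominating_set k H B" and f: "f \<in> split_injections k n a B"
  shows "2 ^ card (inner_pairs a n) / 2 ^ ((card B choose 2) + ((k - card B) choose 2))
    \<le> real (card {\<sigma> \<in> Pow (inner_pairs a n). copy_map k H (split_tournament a \<sigma>) f})"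
proof -
  let ?P = "inner_pairs a n"
  define Q where "Q = {(x, y) \<in> ?P. x \<in> f ` {0..<k} \<and> y \<in> f ` {0..<k}}"
  define \<tau> where "\<tau> = {(x, y) \<in> Q. \<exists>u<k. \<exists>v<k. x = f u \<and> y = f v \<and> H u v}"
  have Q: "Q \<subseteq> ?P" "\<tau> \<subseteq> Q" by (auto simp: Q_def \<tau>_def)
  have f_inj: "inj_on f {0..<k}" and f_range: "\<And>u. u < k \<Longrightarrow> f u < n"
    using f by (auto simp: split_injections_def injections_def PiE_def)
  have f_eq_iff: "\<And>x y. x < k \<Longrightarrow> y < k \<Longrightarrow> f x = f y \<longleftrightarrow> x = y"
    using inj_on_eq_iff[OF f_inj] by simp
  \<comment> \<open>the copy-map condition only prescribes \<open>\<sigma>\<close> on the pairs \<open>Q\<close> inside the image of \<open>f\<close>\<close>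
  have "{\<sigma> \<in> Pow ?P. \<sigma> \<inter> Q = \<tau>} \<subseteq> {\<sigma> \<in> Pow ?P. copy_map k H (split_tournament a \<sigma>) f}"
  proof
    fix \<sigma> assume "\<sigma> \<in> {\<sigma> \<in> Pow ?P. \<sigma> \<inter> Q = \<tau>}"
    then have "\<sigma> \<subseteq> ?P" and \<sigma>: "\<sigma> \<inter> Q = \<tau>" by auto
    have "copy_map k H (split_tournament a \<sigma>) f"
    proof (rule copy_map_split_tournament[OF H dom f])
      fix u v assume uv: "u < k" "v < k" "f u < f v" "f u < a \<longleftrightarrow> f v < a"
      then have "(f u, f v) \<in> Q" using f_range[of v] by (auto simp: Q_def inner_pairs_def)
      then have "(f u, f v) \<in> \<sigma> \<longleftrightarrow> (f u, f v) \<in> \<tau>" using \<sigma> by blast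
      also have "\<dots> \<longleftrightarrow> H u v"
        using \<open>(f u, f v) \<in> Q\<close> uv by (auto simp: \<tau>_def f_eq_iff)
      finally show "(f u, f v) \<in> \<sigma> \<longleftrightarrow> H u v" .
    qed
    with \<open>\<sigma> \<subseteq> ?P\<close> show "\<sigma> \<in> {\<sigma> \<in> Pow ?P. copy_map k H (split_tournament a \<sigma>) f}" by simp
  qed
  then have "card {\<sigma> \<in> Pow ?P. \<sigma> \<inter> Q = \<tau>}
      \<le> card {\<sigma> \<in> Pow ?P. copy_map k H (split_tournament a \<sigma>) f}"
    by (rule card_mono[rotated]) (simp add: finite_inner_pairs)
  then have many: "2 ^ (card ?P - card Q) \<le> card {\<sigma> \<in> Pow ?P. copy_map k H (split_tournament a \<sigma>) f}"
    using card_Pow_restrict[OF finite_inner_pairs Q] by simp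
  have "card Q \<le> (card B choose 2) + ((k - card B) choose 2)"
    unfolding Q_def using dom f by (intro card_inner_pairs_in_image_le) (auto simp: dominating_set_def)
  then have "(2::real) ^ card ?P / 2 ^ ((card B choose 2) + ((k - card B) choose 2))
      \<le> 2 ^ card ?P / 2 ^ card Q"
    by (intro divide_left_mono) (auto intro: power_increasing)
  also have "\<dots> = 2 ^ (card ?P - card Q)"
    using card_mono[OF finite_inner_pairs Q(1)] by (simp add: power_diff)
  also have "\<dots> \<le> real (card {\<sigma> \<in> Pow ?P. copy_map k H (split_tournament a \<sigma>) f})"
    using of_nat_le_iff[where 'a = real, THEN iffD2, OF many] by simp
  finally show ?thesis .
qed

section \<open>Averaging over random orientations\<close>

text \<open>The expected number of copy maps in \<open>split_injections k n a B\<close>, for \<open>card B = b\<close> and \<open>B\<close>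
  dominating, when the pairs inside both parts are oriented uniformly at random.\<close>

definition split_weight :: "nat \<Rightarrow> nat \<Rightarrow> nat \<Rightarrow> nat \<Rightarrow> real" where
  "split_weight k n a b =
     falling_fact a b * falling_fact (n - a) (k - b) / 2 ^ ((b choose 2) + ((k - b) choose 2))"

lemma sum_card_copy_maps_over_orientations_ge:
  assumes H: "tournament k H" and dom: "dominating_set k H B" and "a \<le> n"
  shows "2 ^ card (inner_pairs a n) * split_weight k n a (card B)
    \<le> (\<Sum>\<sigma>\<in>Pow (inner_pairs a n).
          real (card {f \<in> split_injections k n a B. copy_map k H (split_tournament a \<sigma>) f}))"
proof -
  let ?I = "Pow (inner_pairs a n)" and ?E = "split_injections k n a B"
  let ?R = "\<lambda>\<sigma> f. copy_map k H (split_tournament a \<sigma>) f"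
  define X :: real where "X = 2 ^ card (inner_pairs a n) / 2 ^ ((card B choose 2) + ((k - card B) choose 2))"
  have "B \<subseteq> {0..<k}" using dom by (simp add: dominating_set_def)
  have "2 ^ card (inner_pairs a n) * split_weight k n a (card B)
      = X * (falling_fact a (card B) * falling_fact (n - a) (k - card B))"
    by (simp add: split_weight_def X_def)
  also have "\<dots> \<le> X * real (card ?E)"
    by (rule mult_left_mono[OF card_split_injections_ge[OF \<open>B \<subseteq> {0..<k}\<close> \<open>a \<le> n\<close>]])
      (simp add: X_def)
  also have "\<dots> = (\<Sum>f\<in>?E. X)" by simp
  also have "\<dots> \<le> (\<Sum>f\<in>?E. real (card {\<sigma> \<in> ?I. ?R \<sigma> f}))"
    unfolding X_def by (intro sum_mono card_orientations_with_copy_map_ge[OF H dom]) simp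
  also have "\<dots> = real (\<Sum>f\<in>?E. card {\<sigma> \<in> ?I. ?R \<sigma> f})" by simp
  also have "(\<Sum>f\<in>?E. card {\<sigma> \<in> ?I. ?R \<sigma> f}) = (\<Sum>\<sigma>\<in>?I. card {f \<in> ?E. ?R \<sigma> f})"
    using sum.swap_restrict[where g = "\<lambda>_ _. 1::nat" and R = "\<lambda>f \<sigma>. ?R \<sigma> f",
        OF finite_split_injections finite_Pow_iff[THEN iffD2, OF finite_inner_pairs]]
    by simp
  finally show ?thesis by simp
qed

lemma sum_card_split_copy_maps_le:
  assumes "finite \<B>" and B: "\<And>B. B \<in> \<B> \<Longrightarrow> B \<subseteq> {0..<k}"
  shows "(\<Sum>B\<in>\<B>. card {f \<in> split_injections k n a B. copy_map k H G f})
    \<le> card (Aut k H) * copy_count k H n G"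
proof -
  let ?M = "\<lambda>B. {f \<in> split_injections k n a B. copy_map k H G f}"
  have "?M B \<inter> ?M B' = {}" if "B \<in> \<B>" "B' \<in> \<B>" "B \<noteq> B'" for B B'
  proof -
    have "B = B'" if "f \<in> ?M B" "f \<in> ?M B'" for f
      using that B[OF \<open>B \<in> \<B>\<close>] B[OF \<open>B' \<in> \<B>\<close>] by (auto simp: split_injections_def)
    then show ?thesis using \<open>B \<noteq> B'\<close> by blast
  qed
  then have "(\<Sum>B\<in>\<B>. card (?M B)) = card (\<Union>B\<in>\<B>. ?M B)"
    using \<open>finite \<B>\<close> finite_split_injections by (intro card_UN_disjoint[symmetric]) auto
  also have "\<dots> \<le> card {f \<in> injections k n. copy_map k H G f}"
    by (intro card_mono) (auto simp: split_injections_def intro: finite_subset[OF _ finite_injections])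
  also have "\<dots> \<le> card (Aut k H) * copy_count k H n G"
    by (rule card_copy_maps_le)
  finally show ?thesis .
qed

lemma exists_split_tournament_with_many_copies:
  assumes H: "tournament k H" and "finite \<B>" and dom: "\<And>B. B \<in> \<B> \<Longrightarrow> dominating_set k H B"
    and "a \<le> n"
  shows "\<exists>\<sigma>. (\<Sum>B\<in>\<B>. split_weight k n a (card B))
    \<le> real (card (Aut k H) * copy_count k H n (split_tournament a \<sigma>))"
proof (rule ccontr)
  let ?I = "Pow (inner_pairs a n)"
  let ?W = "\<Sum>B\<in>\<B>. split_weight k n a (card B)"
  let ?c = "\<lambda>\<sigma>. real (card (Aut k H) * copy_count k H n (split_tournament a \<sigma>))"
  let ?M = "\<lambda>\<sigma> B. card {f \<in> split_injections k n a B. copy_map k H (split_tournament a \<sigma>) f}"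
  assume "\<not> ?thesis"
  then have "(\<Sum>\<sigma>\<in>?I. ?c \<sigma>) < real (card ?I) * ?W"
    by (intro sum_bounded_above_strict) (auto simp: not_le card_gt_0_iff finite_inner_pairs)
  also have "\<dots> = (\<Sum>B\<in>\<B>. 2 ^ card (inner_pairs a n) * split_weight k n a (card B))"
    by (simp add: card_Pow finite_inner_pairs sum_distrib_left)
  also have "\<dots> \<le> (\<Sum>B\<in>\<B>. \<Sum>\<sigma>\<in>?I. real (?M \<sigma> B))"
    by (intro sum_mono sum_card_copy_maps_over_orientations_ge H dom \<open>a \<le> n\<close>)
  also have "\<dots> = (\<Sum>\<sigma>\<in>?I. real (\<Sum>B\<in>\<B>. ?M \<sigma> B))"
    by (subst sum.swap) simp
  also have "\<dots> \<le> (\<Sum>\<sigma>\<in>?I. ?c \<sigma>)"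
    using dom \<open>finite \<B>\<close>
    by (intro sum_mono of_nat_mono sum_card_split_copy_maps_le) (auto simp: dominating_set_def)
  finally show False by simp
qed

lemma split_weight_scaled_tendsto:
  assumes "b \<le> k"
  shows "(\<lambda>i. split_weight k (q * i) (p * i) b / real i ^ k)
    \<longlonglongrightarrow> real p ^ b * real (q - p) ^ (k - b) / 2 ^ ((b choose 2) + ((k - b) choose 2))"
proof -
  let ?c = "(2::real) ^ ((b choose 2) + ((k - b) choose 2))"
  have "(\<lambda>i. falling_fact (p * i) b / real i ^ b * (falling_fact ((q - p) * i) (k - b) / real i ^ (k - b)) / ?c)
      \<longlonglongrightarrow> real p ^ b * real (q - p) ^ (k - b) / ?c"
    by (intro tendsto_divide tendsto_mult falling_fact_scaled_tendsto tendsto_const) simp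
  moreover have "falling_fact (p * i) b / real i ^ b * (falling_fact ((q - p) * i) (k - b) / real i ^ (k - b)) / ?c
      = split_weight k (q * i) (p * i) b / real i ^ k" if "i > 0" for i
  proof -
    have "real i ^ k = real i ^ b * real i ^ (k - b)"
      using \<open>b \<le> k\<close> by (simp flip: power_add)
    then show ?thesis
      using that by (simp add: split_weight_def diff_mult_distrib)
  qed
  then have "eventually (\<lambda>i. falling_fact (p * i) b / real i ^ b * (falling_fact ((q - p) * i) (k - b) / real i ^ (k - b)) / ?c
      = split_weight k (q * i) (p * i) b / real i ^ k) sequentially"
    using eventually_gt_at_top[of 0] by (rule eventually_mono[rotated]) blast
  ultimately show ?thesis by (rule Lim_transform_eventually)
qed

lemma eventually_falling_fact_le_split_weights:
  assumes V: "real q ^ k < real p ^ k + real (q - p) ^ k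
      + 2 ^ (j * (k - j)) * real p ^ j * real (q - p) ^ (k - j)"
    and "j \<le> k"
  shows "eventually (\<lambda>i. falling_fact (q * i) k / 2 ^ (k choose 2)
      \<le> split_weight k (q * i) (p * i) 0 + split_weight k (q * i) (p * i) j
        + split_weight k (q * i) (p * i) k) sequentially"
proof -
  let ?S = "\<lambda>i. split_weight k (q * i) (p * i) 0 + split_weight k (q * i) (p * i) j
    + split_weight k (q * i) (p * i) k"
  let ?F = "\<lambda>i. falling_fact (q * i) k / 2 ^ (k choose 2)"
  have choose_k: "k choose 2 = (j choose 2) + ((k - j) choose 2) + j * (k - j)"
    using choose_two_add[of j "k - j"] \<open>j \<le> k\<close> by simp
  have "(\<lambda>i. ?S i / real i ^ k) \<longlonglongrightarrow>
      real (q - p) ^ k / 2 ^ (k choose 2)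
      + real p ^ j * real (q - p) ^ (k - j) / 2 ^ ((j choose 2) + ((k - j) choose 2))
      + real p ^ k / 2 ^ (k choose 2)"
    unfolding add_divide_distrib
    using split_weight_scaled_tendsto[of 0 k q p] split_weight_scaled_tendsto[OF \<open>j \<le> k\<close>, of q p]
      split_weight_scaled_tendsto[of k k q p]
    by (intro tendsto_add) (simp_all add: numeral_2_eq_2)
  moreover have "(\<lambda>i. falling_fact (q * i) k / real i ^ k / 2 ^ (k choose 2))
      \<longlonglongrightarrow> real q ^ k / 2 ^ (k choose 2)"
    by (intro tendsto_divide falling_fact_scaled_tendsto tendsto_const) simp
  then have "(\<lambda>i. ?F i / real i ^ k) \<longlonglongrightarrow> real q ^ k / 2 ^ (k choose 2)"
    by (simp add: divide_divide_eq_left mult.commute)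
  ultimately have "(\<lambda>i. ?S i / real i ^ k - ?F i / real i ^ k) \<longlonglongrightarrow>
      (real (q - p) ^ k + 2 ^ (j * (k - j)) * real p ^ j * real (q - p) ^ (k - j) + real p ^ k
        - real q ^ k) / 2 ^ (k choose 2)"
    by (intro tendsto_diff[THEN tendsto_eq_rhs]) (auto simp: choose_k power_add field_simps)
  moreover have "0 < (real (q - p) ^ k + 2 ^ (j * (k - j)) * real p ^ j * real (q - p) ^ (k - j)
      + real p ^ k - real q ^ k) / 2 ^ (k choose 2)"
    using V by simp
  ultimately have "eventually (\<lambda>i. 0 < ?S i / real i ^ k - ?F i / real i ^ k) sequentially"
    by (rule order_tendstoD)
  then show ?thesis
    using eventually_gt_at_top[of 0]
  proof eventually_elim
    fix i :: nat assume "0 < ?S i / real i ^ k - ?F i / real i ^ k" "0 < i"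
    then have "?F i / real i ^ k < ?S i / real i ^ k" "0 < real i ^ k"
      by (simp_all only: diff_gt_0_iff_gt) simp
    then show "?F i \<le> ?S i" using divide_less_cancel[of "?F i" "real i ^ k" "?S i"] by auto
  qed
qed

lemma card_Aut_mult_random_count:
  "real (card (Aut k H)) * (random_density k H * real (n choose k)) = falling_fact n k / 2 ^ (k choose 2)"
proof -
  have "real (card (Aut k H)) \<noteq> 0" using card_Aut_pos[of k H] by simp
  then show ?thesis by (simp add: random_density_def falling_fact_eq_binomial field_simps)
qed

lemma eventually_exists_split_tournament_above_random_count:
  assumes H: "tournament k H" and dom: "dominating_set k H B" and B: "0 < card B" "card B < k"
    and V: "real q ^ k < real p ^ k + real (q - p) ^ k
      + 2 ^ (card B * (k - card B)) * real p ^ card B * real (q - p) ^ (k - card B)"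
    and "p \<le> q"
  shows "eventually (\<lambda>i. \<exists>U. tournament (q * i) U \<and> splits_at (p * i) (q * i) U \<and>
      random_density k H * real (q * i choose k) \<le> real (copy_count k H (q * i) U)) sequentially"
  using eventually_falling_fact_le_split_weights[OF V less_imp_le[OF B(2)]]
proof eventually_elim
  fix i
  let ?n = "q * i" and ?a = "p * i"
  assume le: "falling_fact ?n k / 2 ^ (k choose 2) \<le> split_weight k ?n ?a 0
    + split_weight k ?n ?a (card B) + split_weight k ?n ?a k"
  have "B \<noteq> {}" "B \<noteq> {0..<k}" "{} \<noteq> {0..<k}" using B by auto
  then have "(\<Sum>C\<in>{{}, B, {0..<k}}. split_weight k ?n ?a (card C))
      = split_weight k ?n ?a 0 + split_weight k ?n ?a (card B) + split_weight k ?n ?a k"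
    by simp
  moreover obtain \<sigma> where "(\<Sum>C\<in>{{}, B, {0..<k}}. split_weight k ?n ?a (card C))
      \<le> real (card (Aut k H) * copy_count k H ?n (split_tournament ?a \<sigma>))"
  proof -
    have "\<And>C. C \<in> {{}, B, {0..<k}} \<Longrightarrow> dominating_set k H C"
      using dom dominating_set_empty dominating_set_all by blast
    moreover have "?a \<le> ?n" using \<open>p \<le> q\<close> by simp
    ultimately show ?thesis
      using exists_split_tournament_with_many_copies[OF H, of "{{}, B, {0..<k}}" ?a ?n] that by auto
  qed
  ultimately have "real (card (Aut k H)) * (random_density k H * real (?n choose k))
      \<le> real (card (Aut k H)) * real (copy_count k H ?n (split_tournament ?a \<sigma>))"
    using le card_Aut_mult_random_count[of k H ?n] by simp
  then have "random_density k H * real (?n choose k) \<le> real (copy_count k H ?n (split_tournament ?a \<sigma>))"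
    using card_Aut_pos[of k H] by (simp add: mult_le_cancel_left_pos)
  then show "\<exists>U. tournament ?n U \<and> splits_at ?a ?n U \<and>
      random_density k H * real (?n choose k) \<le> real (copy_count k H ?n U)"
    using tournament_split_tournament splits_at_split_tournament by blast
qed

section \<open>Interpolating between split tournaments\<close>

lemma induces_copy_cong:
  assumes "\<And>u v. u \<in> S \<Longrightarrow> v \<in> S \<Longrightarrow> G u v = G' u v"
  shows "induces_copy k H G S = induces_copy k H G' S"
proof -
  have "(\<forall>u<k. \<forall>v<k. H u v \<longleftrightarrow> G (f u) (f v)) = (\<forall>u<k. \<forall>v<k. H u v \<longleftrightarrow> G' (f u) (f v))"
    if "bij_betw f {0..<k} S" for f
    using that assms by (auto simp: bij_betw_def)
  then show ?thesis unfolding induces_copy_def by blast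
qed

lemma copy_count_cong:
  assumes "\<And>u v. u < n \<Longrightarrow> v < n \<Longrightarrow> G u v = G' u v"
  shows "copy_count k H n G = copy_count k H n G'"
proof -
  have "induces_copy k H G S = induces_copy k H G' S" if "S \<subseteq> {0..<n}" for S
    using that by (intro induces_copy_cong assms) auto
  then show ?thesis unfolding copy_count_def by (metis (no_types, lifting))
qed

lemma card_subsets_containing_le:
  assumes "t < n" "1 \<le> k"
  shows "card {S. S \<subseteq> {0..<n} \<and> card S = k \<and> t \<in> S} \<le> (n - 1) choose (k - 1)"
proof -
  let ?A = "{S. S \<subseteq> {0..<n} \<and> card S = k \<and> t \<in> S}"
  let ?B = "{T. T \<subseteq> {0..<n} - {t} \<and> card T = k - 1}"
  have "inj_on (\<lambda>S. S - {t}) ?A"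
    by (rule inj_onI) (metis (no_types, lifting) insert_Diff mem_Collect_eq)
  moreover have "(\<lambda>S. S - {t}) ` ?A \<subseteq> ?B"
  proof
    fix T assume "T \<in> (\<lambda>S. S - {t}) ` ?A"
    then obtain S where S: "S \<subseteq> {0..<n}" "card S = k" "t \<in> S" "T = S - {t}" by blast
    have "finite S" using S(1) finite_subset by blast
    then show "T \<in> ?B" using S by auto
  qed
  ultimately have "card ?A \<le> card ?B" by (rule card_inj_on_le) simp
  also have "card ?B = card ({0..<n} - {t}) choose (k - 1)" by (rule n_subsets) simp
  also have "card ({0..<n} - {t}) = n - 1" using assms by simp
  finally show ?thesis .
qed

lemma copy_count_le_change_at_vertex:
  assumes "t < n" "1 \<le> k"
    and agree: "\<And>u v. u < n \<Longrightarrow> v < n \<Longrightarrow> u \<noteq> t \<Longrightarrow> v \<noteq> t \<Longrightarrow> G u v = G' u v"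
  shows "copy_count k H n G \<le> copy_count k H n G' + ((n - 1) choose (k - 1))"
proof -
  let ?Q = "\<lambda>G. {S. S \<subseteq> {0..<n} \<and> card S = k \<and> induces_copy k H G S}"
  let ?C = "{S. S \<subseteq> {0..<n} \<and> card S = k \<and> t \<in> S}"
  have "?Q G \<subseteq> ?Q G' \<union> ?C"
  proof
    fix S assume S: "S \<in> ?Q G"
    show "S \<in> ?Q G' \<union> ?C"
    proof (cases "t \<in> S")
      case False
      then have "induces_copy k H G S = induces_copy k H G' S"
        using S by (intro induces_copy_cong agree) auto
      then show ?thesis using S by auto
    qed (use S in auto)
  qed
  then have "card (?Q G) \<le> card (?Q G' \<union> ?C)"
    by (intro card_mono) (auto intro: finite_subset[of _ "Pow {0..<n}"])
  also have "\<dots> \<le> card (?Q G') + card ?C" by (rule card_Un_le)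
  also have "\<dots> \<le> card (?Q G') + ((n - 1) choose (k - 1))"
    using card_subsets_containing_le[OF assms(1,2)] by simp
  finally show ?thesis by (simp add: copy_count_def)
qed

lemma discrete_intermediate_value:
  fixes c :: "nat \<Rightarrow> real"
  assumes "c 0 \<le> T" "T \<le> c N" "\<And>t. t < N \<Longrightarrow> \<bar>c (Suc t) - c t\<bar> \<le> D" "0 \<le> D"
  shows "\<exists>t\<le>N. \<bar>c t - T\<bar> \<le> D"
proof -
  define t0 where "t0 = (LEAST t. T \<le> c t)"
  have "T \<le> c t0" "t0 \<le> N"
    unfolding t0_def using assms(2) by (auto intro: LeastI Least_le)
  show ?thesis
  proof (cases t0)
    case 0
    then show ?thesis using \<open>T \<le> c t0\<close> \<open>t0 \<le> N\<close> assms(1,4) by auto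
  next
    case (Suc s)
    then have "\<not> T \<le> c s" unfolding t0_def by (metis lessI not_less_Least)
    moreover have "\<bar>c (Suc s) - c s\<bar> \<le> D" using Suc \<open>t0 \<le> N\<close> by (intro assms(3)) simp
    ultimately show ?thesis using \<open>T \<le> c t0\<close> \<open>t0 \<le> N\<close> Suc by (intro exI[of _ t0]) auto
  qed
qed

lemma exists_split_tournament_near:
  assumes L: "tournament n L" "splits_at a n L" and U: "tournament n U" "splits_at a n U"
    and "1 \<le> k" and "real (copy_count k H n L) \<le> T" "T \<le> real (copy_count k H n U)"
  shows "\<exists>G. tournament n G \<and> splits_at a n G \<and>
    \<bar>real (copy_count k H n G) - T\<bar> \<le> real ((n - 1) choose (k - 1))"
proof -
  define G where "G t = (\<lambda>u v. if u < t \<and> v < t then U u v else L u v)" for t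
  define c where "c t = real (copy_count k H n (G t))" for t
  have G: "tournament n (G t)" "splits_at a n (G t)" for t
  proof -
    show "tournament n (G t)"
    proof (rule tournamentI)
      fix u assume "u < n"
      then show "\<not> G t u u"
        using tournament_irrefl[OF L(1)] tournament_irrefl[OF U(1)] by (simp add: G_def)
    next
      fix u v assume "u < n" "v < n" "u \<noteq> v"
      then show "G t u v \<longleftrightarrow> \<not> G t v u"
        using tournament_flip[OF L(1) \<open>u < n\<close> \<open>v < n\<close> \<open>u \<noteq> v\<close>]
          tournament_flip[OF U(1) \<open>u < n\<close> \<open>v < n\<close> \<open>u \<noteq> v\<close>]
        by (simp add: G_def)
    qed
    show "splits_at a n (G t)" using L(2) U(2) by (simp add: splits_at_def G_def)
  qed
  have "c 0 = real (copy_count k H n L)" by (simp add: c_def G_def)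
  moreover have "c n = real (copy_count k H n U)"
    unfolding c_def by (rule arg_cong[OF copy_count_cong]) (auto simp: G_def)
  moreover have "\<bar>c (Suc t) - c t\<bar> \<le> real ((n - 1) choose (k - 1))" if "t < n" for t
  proof -
    have agree: "G (Suc t) u v = G t u v" if "u < n" "v < n" "u \<noteq> t" "v \<noteq> t" for u v
      using that by (auto simp: G_def less_Suc_eq)
    have "copy_count k H n (G (Suc t)) \<le> copy_count k H n (G t) + ((n - 1) choose (k - 1))"
      "copy_count k H n (G t) \<le> copy_count k H n (G (Suc t)) + ((n - 1) choose (k - 1))"
      using copy_count_le_change_at_vertex[OF \<open>t < n\<close> \<open>1 \<le> k\<close>] agree by metis+
    then show ?thesis unfolding c_def by linarith
  qed
  ultimately obtain t where "\<bar>c t - T\<bar> \<le> real ((n - 1) choose (k - 1))"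
    using discrete_intermediate_value[of c T n "real ((n - 1) choose (k - 1))"] assms(6,7)
    by auto
  then show ?thesis using G unfolding c_def by blast
qed

lemma copy_count_of_less_eq_0:
  assumes "\<not> transitive_tournament k H"
  shows "copy_count k H n (\<lambda>u v. u < v) = 0"
proof -
  have "\<not> induces_copy k H (\<lambda>u v. u < v) S" for S
  proof
    assume "induces_copy k H (\<lambda>u v. u < v) S"
    then obtain f where "bij_betw f {0..<k} S" and f: "\<forall>u<k. \<forall>v<k. H u v \<longleftrightarrow> f u < f v"
      unfolding induces_copy_def by (elim exE conjE)
    have "H u w" if "u < k" "v < k" "w < k" "H u v" "H v w" for u v w
    proof -
      have "f u < f v" "f v < f w" using f that by auto
      then have "f u < f w" by simp
      then show ?thesis using f that by auto
    qed
    then have "transitive_tournament k H"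
      unfolding transitive_tournament_def by blast
    with assms show False by simp
  qed
  then show ?thesis by (simp add: copy_count_def)
qed

lemma exists_split_tournament_near_target:
  assumes "\<not> transitive_tournament k H" "1 \<le> k" "0 \<le> T"
    and U: "tournament n U" "splits_at a n U" "T \<le> real (copy_count k H n U)"
  shows "\<exists>G. tournament n G \<and> splits_at a n G \<and>
    \<bar>real (copy_count k H n G) - T\<bar> \<le> real ((n - 1) choose (k - 1))"
  using exists_split_tournament_near[OF tournament_less splits_at_less U(1,2) \<open>1 \<le> k\<close> _ U(3)]
    copy_count_of_less_eq_0[OF assms(1)] \<open>0 \<le> T\<close>
  by simp

lemma abs_density_diff_le:
  assumes "1 \<le> k" "k \<le> n"
    and close: "\<bar>real (copy_count k H n G) - r * real (n choose k)\<bar> \<le> real ((n - 1) choose (k - 1))"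
  shows "\<bar>density k H n G - r\<bar> \<le> real k / real n"
proof -
  have pos: "0 < real (n choose k)" using \<open>k \<le> n\<close> by simp
  have "Suc (k - 1) * (n choose Suc (k - 1)) = n * ((n - 1) choose (k - 1))"
    by (rule binomial_absorption)
  then have absorb: "real k * real (n choose k) = real n * real ((n - 1) choose (k - 1))"
    using \<open>1 \<le> k\<close> by (metis Suc_diff_1 less_le_trans of_nat_mult zero_less_one)
  have "\<bar>density k H n G - r\<bar> = \<bar>real (copy_count k H n G) - r * real (n choose k)\<bar> / real (n choose k)"
    using pos by (simp add: density_eq_copy_count field_simps)
  also have "\<dots> \<le> real ((n - 1) choose (k - 1)) / real (n choose k)"
    using close pos by (simp add: divide_right_mono)
  also have "\<dots> = real k / real n"
    using absorb pos \<open>1 \<le> k\<close> \<open>k \<le> n\<close> by (simp add: field_simps)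
  finally show ?thesis .
qed

lemma exists_split_sequence_density_tendsto:
  assumes H: "tournament k H" "\<not> transitive_tournament k H"
    and dom: "dominating_set k H B" "0 < card B" "card B < k"
    and V: "real q ^ k < real p ^ k + real (q - p) ^ k
      + 2 ^ (card B * (k - card B)) * real p ^ card B * real (q - p) ^ (k - card B)"
    and "p \<le> q" "0 < q"
  shows "\<exists>Gs. (\<forall>i. tournament (q * i) (Gs i) \<and> splits_at (p * i) (q * i) (Gs i)) \<and>
    (\<lambda>i. density k H (q * i) (Gs i)) \<longlonglongrightarrow> random_density k H"
proof -
  let ?T = "\<lambda>i. random_density k H * real (q * i choose k)"
  let ?ok = "\<lambda>i G. tournament (q * i) G \<and> splits_at (p * i) (q * i) G"
  let ?above = "\<lambda>i. \<exists>U. tournament (q * i) U \<and> splits_at (p * i) (q * i) U \<and>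
    ?T i \<le> real (copy_count k H (q * i) U)"
  let ?near = "\<lambda>i G. \<bar>real (copy_count k H (q * i) G) - ?T i\<bar> \<le> real ((q * i - 1) choose (k - 1))"
  have "1 \<le> k" using dom by simp
  have "\<exists>G. ?ok i G \<and> (?above i \<longrightarrow> ?near i G)" for i
  proof (cases "?above i")
    case True
    moreover have "0 \<le> ?T i" by (simp add: random_density_nonneg)
    ultimately show ?thesis
      using exists_split_tournament_near_target[OF H(2) \<open>1 \<le> k\<close>] by blast
  next
    case False
    then show ?thesis using tournament_less splits_at_less by blast
  qed
  then obtain Gs where Gs: "\<And>i. ?ok i (Gs i)" and near: "\<And>i. ?above i \<Longrightarrow> ?near i (Gs i)"
    by metis
  have "eventually (\<lambda>i. \<bar>density k H (q * i) (Gs i) - random_density k H\<bar> \<le> real k / real q / real i)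
      sequentially"
    using eventually_exists_split_tournament_above_random_count[OF H(1) dom V \<open>p \<le> q\<close>]
      eventually_ge_at_top[of k]
  proof eventually_elim
    fix i assume "?above i" "k \<le> i"
    moreover have "i \<le> q * i" using \<open>0 < q\<close> by (cases q) simp_all
    ultimately have "\<bar>density k H (q * i) (Gs i) - random_density k H\<bar> \<le> real k / real (q * i)"
      using near by (intro abs_density_diff_le \<open>1 \<le> k\<close>) (auto intro: le_trans)
    then show "\<bar>density k H (q * i) (Gs i) - random_density k H\<bar> \<le> real k / real q / real i"
      by simp
  qed
  then have "(\<lambda>i. density k H (q * i) (Gs i) - random_density k H) \<longlonglongrightarrow> 0"
    by (intro tendsto_0_le[OF lim_const_over_n[of "real k / real q"], where K = 1]) simp
  then show ?thesis using Gs by (auto simp: LIM_zero_iff)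
qed

section \<open>The strongly connected tournament on four vertices\<close>

definition strong_four :: "nat \<Rightarrow> nat \<Rightarrow> bool" where
  "strong_four u v \<longleftrightarrow>
     (u = 0 \<and> (v = 1 \<or> v = 2)) \<or> (u = 1 \<and> (v = 2 \<or> v = 3)) \<or> (u = 2 \<and> v = 3) \<or> (u = 3 \<and> v = 0)"

lemma tournament_strong_four: "tournament 4 strong_four"
proof (rule tournamentI)
  fix u v :: nat assume "u < 4" "v < 4" "u \<noteq> v"
  then have "u \<in> {0, 1, 2, 3}" "v \<in> {0, 1, 2, 3}" by auto
  then show "strong_four u v \<longleftrightarrow> \<not> strong_four v u"
    using \<open>u \<noteq> v\<close> by (auto simp: strong_four_def)
qed (auto simp: strong_four_def)

lemma Aut_strong_four: "Aut 4 strong_four = {id}"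
proof
  show "Aut 4 strong_four \<subseteq> {id}"
  proof
    fix p assume "p \<in> Aut 4 strong_four"
    then have perm: "p permutes {0..<4}"
      and arcs: "\<And>u v. u < 4 \<Longrightarrow> v < 4 \<Longrightarrow> strong_four u v = strong_four (p u) (p v)"
      by (auto simp: Aut_def)
    have images: "strong_four (p 0) (p 1)" "strong_four (p 1) (p 2)" "strong_four (p 2) (p 3)"
      "strong_four (p 3) (p 0)" "strong_four (p 0) (p 2)" "strong_four (p 1) (p 3)"
      using arcs[of 0 1] arcs[of 1 2] arcs[of 2 3] arcs[of 3 0] arcs[of 0 2] arcs[of 1 3]
      by (auto simp: strong_four_def)
    from images(1) consider "p 0 = 0" | "p 0 = 1" | "p 0 = 2" | "p 0 = 3"
      unfolding strong_four_def by auto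
    then have fixed: "p 0 = 0 \<and> p 1 = 1 \<and> p 2 = 2 \<and> p 3 = 3"
      by cases (use images in \<open>auto simp: strong_four_def\<close>)
    have "p x = x" for x
    proof (cases "x < 4")
      case True
      then have "x \<in> {0, 1, 2, 3}" by auto
      then show ?thesis using fixed by auto
    next
      case False
      then show ?thesis using perm by (simp add: permutes_def)
    qed
    then show "p \<in> {id}" by auto
  qed
qed (simp add: id_in_Aut)

lemma random_density_strong_four: "random_density 4 strong_four = 3 / 8"
  unfolding random_density_def Aut_strong_four by (simp add: choose_two fact_numeral)

text \<open>The 4-cycle \<open>0, 1, 2, 3\<close> of \<open>strong_four\<close> cannot cross the split, as no arc leads back from
  the upper part to the lower one.\<close>

lemma induces_copy_strong_four_within_part:
  assumes G: "tournament n G" "splits_at a n G"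
    and S: "S \<subseteq> {0..<n}" "induces_copy 4 strong_four G S"
  shows "S \<subseteq> {0..<a} \<or> S \<subseteq> {a..<n}"
proof -
  obtain f where f: "bij_betw f {0..<4} S" "\<forall>u<4. \<forall>v<4. strong_four u v \<longleftrightarrow> G (f u) (f v)"
    using S(2) unfolding induces_copy_def by blast
  have f_range: "f u < n" if "u < 4" for u
  proof -
    have "f u \<in> S" using f(1) that by (auto simp: bij_betw_def)
    then show ?thesis using S(1) by auto
  qed
  have stays_below: "f u < a" if "u < 4" "w < 4" "strong_four u w" "f w < a" for u w
  proof (rule ccontr)
    assume "\<not> f u < a"
    then have "G (f w) (f u)" using G(2) that(4) f_range[OF that(1)] by (simp add: splits_at_def)
    moreover have "G (f u) (f w)" using f(2) that by simp
    ultimately show False using tournament_asym[OF G(1) f_range[OF that(1)] f_range[OF that(2)]] by blast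
  qed
  have "f 0 < a \<longleftrightarrow> f 1 < a" "f 1 < a \<longleftrightarrow> f 2 < a" "f 2 < a \<longleftrightarrow> f 3 < a"
    using stays_below[of 0 1] stays_below[of 1 2] stays_below[of 2 3] stays_below[of 3 0]
    by (auto simp: strong_four_def)
  moreover have "S = {f 0, f 1, f 2, f 3}"
  proof -
    have "{0..<4::nat} = {0, 1, 2, 3}" by auto
    then show ?thesis using f(1) by (auto simp: bij_betw_def)
  qed
  ultimately show ?thesis
    using f_range[of 0] f_range[of 1] f_range[of 2] f_range[of 3] by (cases "f 0 < a") auto
qed

lemma copy_count_strong_four_split_le:
  assumes G: "tournament n G" "splits_at a n G"
  shows "copy_count 4 strong_four n G \<le> (a choose 4) + ((n - a) choose 4)"
proof -
  have "{S. S \<subseteq> {0..<n} \<and> card S = 4 \<and> induces_copy 4 strong_four G S}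
      \<subseteq> {S. S \<subseteq> {0..<a} \<and> card S = 4} \<union> {S. S \<subseteq> {a..<n} \<and> card S = 4}"
    using induces_copy_strong_four_within_part[OF G] by blast
  then have "copy_count 4 strong_four n G
      \<le> card ({S. S \<subseteq> {0..<a} \<and> card S = 4} \<union> {S. S \<subseteq> {a..<n} \<and> card S = 4})"
    unfolding copy_count_def by (rule card_mono[rotated]) auto
  also have "\<dots> \<le> card {S. S \<subseteq> {0..<a} \<and> card S = 4} + card {S. S \<subseteq> {a..<n} \<and> card S = 4}"
    by (rule card_Un_le)
  also have "\<dots> = (a choose 4) + ((n - a) choose 4)"
    using n_subsets[of "{0..<a}" 4] n_subsets[of "{a..<n}" 4] by simp
  finally show ?thesis .
qed

lemma density_strong_four_split_le:
  assumes "tournament n G" "splits_at a n G"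
  shows "density 4 strong_four n G \<le> (falling_fact a 4 + falling_fact (n - a) 4) / falling_fact n 4"
proof -
  have "density 4 strong_four n G \<le> real ((a choose 4) + ((n - a) choose 4)) / real (n choose 4)"
    unfolding density_eq_copy_count
    using copy_count_strong_four_split_le[OF assms] by (intro divide_right_mono) auto
  also have "\<dots> = (real (a choose 4) * fact 4 + real ((n - a) choose 4) * fact 4)
      / (real (n choose 4) * fact 4)"
    by (simp only: of_nat_add distrib_right[symmetric] mult_divide_mult_cancel_right[OF fact_nonzero])
  finally show ?thesis by (simp only: falling_fact_eq_binomial)
qed

lemma falling_fact_four_ratio_tendsto:
  assumes "0 < q"
  shows "(\<lambda>i. (falling_fact (p * i) 4 + falling_fact ((q - p) * i) 4) / falling_fact (q * i) 4)
    \<longlonglongrightarrow> (real p ^ 4 + real (q - p) ^ 4) / real q ^ 4"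
proof -
  have "(\<lambda>i. (falling_fact (p * i) 4 / real i ^ 4 + falling_fact ((q - p) * i) 4 / real i ^ 4)
      / (falling_fact (q * i) 4 / real i ^ 4)) \<longlonglongrightarrow> (real p ^ 4 + real (q - p) ^ 4) / real q ^ 4"
    using \<open>0 < q\<close> by (intro tendsto_divide tendsto_add falling_fact_scaled_tendsto) simp
  moreover have "eventually (\<lambda>i. (falling_fact (p * i) 4 / real i ^ 4 + falling_fact ((q - p) * i) 4 / real i ^ 4)
      / (falling_fact (q * i) 4 / real i ^ 4)
      = (falling_fact (p * i) 4 + falling_fact ((q - p) * i) 4) / falling_fact (q * i) 4) sequentially"
    using eventually_gt_at_top[of 0] by eventually_elim (simp add: add_divide_distrib[symmetric])
  ultimately show ?thesis by (rule Lim_transform_eventually)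
qed

lemma split_sequence_not_quasirandom:
  assumes "0 < q" and small: "(real p ^ 4 + real (q - p) ^ 4) / real q ^ 4 < 3 / 8"
    and Gs: "\<And>i. tournament (q * i) (Gs i) \<and> splits_at (p * i) (q * i) (Gs i)"
  shows "\<not> quasirandom (\<lambda>i. q * i) Gs"
proof
  assume "quasirandom (\<lambda>i. q * i) Gs"
  then have "(\<lambda>i. density 4 strong_four (q * i) (Gs i)) \<longlonglongrightarrow> 3 / 8"
    using tournament_strong_four random_density_strong_four unfolding quasirandom_def by metis
  moreover have "\<forall>i. density 4 strong_four (q * i) (Gs i)
      \<le> (falling_fact (p * i) 4 + falling_fact ((q - p) * i) 4) / falling_fact (q * i) 4"
    using Gs density_strong_four_split_le by (simp add: diff_mult_distrib)
  ultimately have "3 / 8 \<le> (real p ^ 4 + real (q - p) ^ 4) / real q ^ 4"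
    by (intro LIMSEQ_le[OF _ falling_fact_four_ratio_tendsto[OF \<open>0 < q\<close>]]) auto
  with small show False by simp
qed

section \<open>Tournaments that are neither transitive nor strongly connected\<close>

lemma exists_dominating_set:
  assumes H: "tournament k H" and "\<not> strongly_connected k H"
  shows "\<exists>B. dominating_set k H B \<and> 0 < card B \<and> card B < k"
proof -
  define R where "R = (\<lambda>x y. x < k \<and> y < k \<and> H x y)"
  obtain u v where uv: "u < k" "v < k" "\<not> R\<^sup>*\<^sup>* u v"
    using assms(2) unfolding strongly_connected_def R_def by blast
  define B where "B = {w. w < k \<and> R\<^sup>*\<^sup>* w v}"
  have "dominating_set k H B"
    unfolding dominating_set_def
  proof (intro conjI ballI allI impI)
    fix b w assume b: "b \<in> B" and w: "w < k" "w \<notin> B"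
    then have "b < k" "b \<noteq> w" "R\<^sup>*\<^sup>* b v" by (auto simp: B_def)
    show "H b w"
    proof (rule ccontr)
      assume "\<not> H b w"
      then have "R w b" using tournament_flip[OF H \<open>b < k\<close> w(1) \<open>b \<noteq> w\<close>] \<open>b < k\<close> w(1)
        by (simp add: R_def)
      then have "R\<^sup>*\<^sup>* w v" using \<open>R\<^sup>*\<^sup>* b v\<close> by (rule converse_rtranclp_into_rtranclp)
      then show False using w by (simp add: B_def)
    qed
  qed (auto simp: B_def)
  moreover have "v \<in> B" "u \<notin> B" "B \<subseteq> {0..<k}" using uv by (auto simp: B_def)
  then have "B \<noteq> {}" "B \<subset> {0..<k}" "finite B" using uv(1) finite_subset by auto
  then have "0 < card B" "card B < k"
    using psubset_card_mono[of "{0..<k}" B] by (simp_all add: card_gt_0_iff)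
  ultimately show ?thesis by blast
qed

text \<open>A cyclic triangle of \<open>H\<close> lies on one side of a dominating set.\<close>

lemma four_le_order:
  assumes H: "tournament k H" "\<not> transitive_tournament k H"
    and dom: "dominating_set k H B" and B: "0 < card B" "card B < k"
  shows "4 \<le> k"
proof -
  obtain x y z where xyz: "x < k" "y < k" "z < k" "H x y" "H y z" "\<not> H x z"
    using H(2) unfolding transitive_tournament_def by blast
  have "x \<noteq> y" "y \<noteq> z" "x \<noteq> z"
    using xyz tournament_irrefl[OF H(1)] tournament_asym[OF H(1) xyz(2,1)] by auto
  then have "H z x" using tournament_flip[OF H(1) xyz(1,3)] xyz(6) by blast
  have "B \<subseteq> {0..<k}" using dom by (simp add: dominating_set_def)
  have closed: "s \<in> B" if "s < k" "t < k" "H s t" "t \<in> B" for s t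
  proof (rule ccontr)
    assume "s \<notin> B"
    then have "H t s" using dom that by (auto simp: dominating_set_def)
    then show False using tournament_asym[OF H(1) that(1,2,3)] by blast
  qed
  have "x \<in> B \<longleftrightarrow> y \<in> B" "y \<in> B \<longleftrightarrow> z \<in> B"
    using closed[OF xyz(1,2,4)] closed[OF xyz(2,3,5)] closed[OF xyz(3,1) \<open>H z x\<close>] by blast+
  then consider "{x, y, z} \<subseteq> B" | "{x, y, z} \<subseteq> {0..<k} - B" using xyz(1-3) by auto
  moreover have "card {x, y, z} = 3" using \<open>x \<noteq> y\<close> \<open>y \<noteq> z\<close> \<open>x \<noteq> z\<close> by simp
  moreover have "finite B" using \<open>B \<subseteq> {0..<k}\<close> finite_subset by blast
  ultimately have "3 \<le> card B \<or> 3 \<le> card ({0..<k} - B)"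
    using card_mono[OF \<open>finite B\<close>, of "{x, y, z}"] card_mono[of "{0..<k} - B" "{x, y, z}"]
    by (cases, simp_all)
  moreover have "card ({0..<k} - B) = k - card B"
    using \<open>B \<subseteq> {0..<k}\<close> \<open>finite B\<close> by (simp add: card_Diff_subset)
  ultimately show ?thesis using B by linarith
qed

lemma four_pow_less:
  assumes "4 \<le> k"
  shows "(4::nat) ^ k < 3 ^ k + 2 ^ (k - 1) * 3 ^ (k - 1)"
proof -
  obtain m where k: "k = m + 4" using assms by (metis add.commute le_Suc_ex)
  have "(4::nat) ^ (m + 4) < 3 ^ (m + 4) + 2 ^ (m + 3) * 3 ^ (m + 3)"
  proof (induction m)
    case (Suc m)
    define X :: nat where "X = 2 ^ (m + 3) * 3 ^ (m + 3)"
    define Y :: nat where "Y = 3 ^ (m + 4)"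
    have "(3::nat) * 3 ^ (m + 3) \<le> (2 * 2 ^ (m + 3)) * 3 ^ (m + 3)"
      using power_increasing[of 3 "m + 3" "2::nat"] by (intro mult_right_mono) simp_all
    moreover have "(3::nat) ^ (m + 4) = 3 * 3 ^ (m + 3)" by (simp add: power_add)
    ultimately have "Y \<le> 2 * X" unfolding X_def Y_def by (simp add: mult.assoc)
    have "(4::nat) ^ (Suc m + 4) = 4 * 4 ^ (m + 4)" by (simp add: power_add)
    also have "\<dots> < 4 * (Y + X)" using Suc by (simp add: X_def Y_def)
    also have "\<dots> \<le> 3 * Y + 6 * X" using \<open>Y \<le> 2 * X\<close> by simp
    also have "\<dots> = 3 ^ (Suc m + 4) + 2 ^ (Suc m + 3) * 3 ^ (Suc m + 3)"
      by (simp add: X_def Y_def power_add)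
    finally show ?case .
  qed simp
  then show ?thesis using k by (simp add: add.commute)
qed

lemma exists_split_ratio:
  assumes "4 \<le> k" "0 < j" "j < k"
  shows "\<exists>p\<in>{1, 2, 3::nat}. real 4 ^ k < real p ^ k + real (4 - p) ^ k
    + 2 ^ (j * (k - j)) * real p ^ j * real (4 - p) ^ (k - j)"
proof -
  have small_j: "(4::real) ^ k < 3 ^ k + 2 ^ (k - 1) * 3 ^ (k - 1)"
    using of_nat_less_iff[where 'a = real, THEN iffD2, OF four_pow_less[OF \<open>4 \<le> k\<close>]] by simp
  consider "j = 1" | "j = k - 1" | "2 \<le> j" "j \<le> k - 2" using assms by linarith
  then show ?thesis
  proof cases
    case 1
    then show ?thesis using small_j by (intro bexI[of _ 1]) simp_all
  next
    case 2
    then have "k - j = 1" using assms by simp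
    then show ?thesis using small_j 2 by (intro bexI[of _ 3]) (simp_all add: mult.commute)
  next
    case 3
    \<comment> \<open>here \<open>2 ^ (j * (k - j))\<close> alone already exceeds \<open>2 ^ k\<close>\<close>
    have "k \<le> j * (k - j)"
      using 3 mult_right_mono[of 2 j "k - j"] mult_left_mono[of 2 "k - j" j] by linarith
    have "(4::real) ^ k = 2 ^ (k + k)" by (simp add: power_add flip: power_mult_distrib)
    also have "\<dots> \<le> 2 ^ (j * (k - j) + k)" using \<open>k \<le> j * (k - j)\<close> by (intro power_increasing) auto
    also have "\<dots> = 2 ^ (j * (k - j)) * 2 ^ j * 2 ^ (k - j)"
      using \<open>j < k\<close> by (simp flip: power_add)
    finally have "(4::real) ^ k \<le> 2 ^ (j * (k - j)) * 2 ^ j * 2 ^ (k - j)" .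
    then have "(4::real) ^ k < 2 * 2 ^ k + 2 ^ (j * (k - j)) * 2 ^ j * 2 ^ (k - j)"
      by (intro add_strict_increasing) simp_all
    then show ?thesis by (intro bexI[of _ 2]) simp_all
  qed
qed

theorem proposition3p1:
  fixes k :: nat and H :: "nat \<Rightarrow> nat \<Rightarrow> bool"
  assumes "tournament k H"
    and "\<not> transitive_tournament k H"
    and "\<not> strongly_connected k H"
  shows "\<not> quasirandom_forcing k H"
proof
  assume forcing: "quasirandom_forcing k H"
  obtain B where B: "dominating_set k H B" "0 < card B" "card B < k"
    using exists_dominating_set[OF assms(1,3)] by blast
  then have "4 \<le> k" using four_le_order[OF assms(1,2)] by blast
  then obtain p where p: "p \<in> {1, 2, 3}" and V: "real 4 ^ k < real p ^ k + real (4 - p) ^ k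
      + 2 ^ (card B * (k - card B)) * real p ^ card B * real (4 - p) ^ (k - card B)"
    using exists_split_ratio B(2,3) by blast
  then obtain Gs where Gs: "\<forall>i. tournament (4 * i) (Gs i) \<and> splits_at (p * i) (4 * i) (Gs i)"
    and "(\<lambda>i. density k H (4 * i) (Gs i)) \<longlonglongrightarrow> random_density k H"
    using exists_split_sequence_density_tendsto[OF assms(1,2) B V] by auto
  moreover have "filterlim (\<lambda>i. 4 * i) at_top sequentially"
    by (rule filterlim_at_top_mono[OF filterlim_ident]) auto
  ultimately have "quasirandom (\<lambda>i. 4 * i) Gs"
    using forcing unfolding quasirandom_forcing_def by blast
  moreover have "(real p ^ 4 + real (4 - p) ^ 4) / real 4 ^ 4 < 3 / 8" using p by auto
  then have "\<not> quasirandom (\<lambda>i. 4 * i) Gs"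
    using split_sequence_not_quasirandom[of 4 p] Gs by auto
  ultimately show False by contradiction
qed

end
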